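(* Let $L$ be an interval locale and $F$ a presheaf of monomorphisms on $L_{+}$. Then the canonical map $\eta:F\to LF$ is a sectionwise monomorphism; hence $F$ is a separated presheaf and $LF$ is the associated sheaf of $F$.
   Context: A locale $L$ is a complete lattice in which finite meets distribute over arbitrary joins, with Grothendieck topology: $\{b_j\le a\}$ covers $a$ iff $\bigvee_j b_j=a$. $L$ is an interval if it is totally ordered and densely ordered ($a<b$ implies there is $s$ with $a<s<b$). $i$ is the bottom element of $L$; $L_{+}=L\sqcup\{0\}$ with a new bottom $0<i$. A presheaf of monomorphisms on $L_{+}$ is a functor $F:(L_{+})^{op}\to\mathbf{Set}$ with $F(0)=\ast$ and $F(b)\to F(a)$ injective for all $a\le b$ in $L$. For a presheaf $F$ on $L_{+}$, $LF$ is the presheaf with $LF(a)=\varprojlim_{0<b<a}F(b)$ for $a\in L$, $a\neq i$, $LF(i)=F(i)$, $LF(0)=\ast$, and $\eta:F\to LF$ the canonical map. A presheaf $F$ is separated if $\eta$ is a sectionwise monomorphism. *)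

theory Defs
  imports Main
begin

text \<open>The locale L is a type 'l of class complete_linorder (a totally ordered complete
lattice is automatically a frame).  L_+ is 'l option, with None the new bottom 0.
A presheaf on L_+ is a pair (F, r): F a is the set of sections over a, and
r b a : F b \<rightarrow> F a is restriction for a \<le> b.\<close>

definition le_plus :: "'l::order option \<Rightarrow> 'l option \<Rightarrow> bool" where
  "le_plus x y \<longleftrightarrow> (case x of None \<Rightarrow> True
      | Some a \<Rightarrow> (case y of None \<Rightarrow> False | Some b \<Rightarrow> a \<le> b))"

definition presheaf :: "('l::order option \<Rightarrow> 'x set) \<Rightarrow> ('l option \<Rightarrow> 'l option \<Rightarrow> 'x \<Rightarrow> 'x) \<Rightarrow> bool" where
  "presheaf F r \<longleftrightarrow>
     (\<forall>a b. le_plus a b \<longrightarrow> (\<forall>x\<in>F b. r b a x \<in> F a)) \<and>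
     (\<forall>a. \<forall>x\<in>F a. r a a x = x) \<and>
     (\<forall>a b c. le_plus a b \<and> le_plus b c \<longrightarrow> (\<forall>x\<in>F c. r b a (r c b x) = r c a x))"

definition presheaf_of_monos :: "('l::order option \<Rightarrow> 'x set) \<Rightarrow> ('l option \<Rightarrow> 'l option \<Rightarrow> 'x \<Rightarrow> 'x) \<Rightarrow> bool" where
  "presheaf_of_monos F r \<longleftrightarrow> presheaf F r \<and> (\<exists>u. F None = {u}) \<and>
     (\<forall>a b. a \<le> b \<longrightarrow> inj_on (r (Some b) (Some a)) (F (Some b)))"

text \<open>Indices b of the diagram defining LF(a): for a \<noteq> i these are 0 < b < a;
for a = i (bottom of L) we use the single index i, so that LF(i) is a canonical copy of F(i).\<close>

fun below :: "'l::complete_linorder option \<Rightarrow> 'l \<Rightarrow> bool" where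
  "below None b = False"
| "below (Some a) b = (b < a \<or> (a = bot \<and> b = bot))"

definition LF :: "('l::complete_linorder option \<Rightarrow> 'x set) \<Rightarrow> ('l option \<Rightarrow> 'l option \<Rightarrow> 'x \<Rightarrow> 'x)
    \<Rightarrow> 'l option \<Rightarrow> ('l \<Rightarrow> 'x) set" where
  "LF F r a = {s. (\<forall>b. below a b \<longrightarrow> s b \<in> F (Some b)) \<and>
                  (\<forall>b c. below a b \<and> c \<le> b \<longrightarrow> r (Some b) (Some c) (s b) = s c) \<and>
                  (\<forall>b. \<not> below a b \<longrightarrow> s b = undefined)}"

definition LFres :: "'l::complete_linorder option \<Rightarrow> 'l option \<Rightarrow> ('l \<Rightarrow> 'x) \<Rightarrow> ('l \<Rightarrow> 'x)" where
  "LFres a a' s = (\<lambda>b. if below a' b then s b else undefined)"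

definition eta :: "('l::complete_linorder option \<Rightarrow> 'l option \<Rightarrow> 'x \<Rightarrow> 'x) \<Rightarrow> 'l option \<Rightarrow> 'x \<Rightarrow> ('l \<Rightarrow> 'x)" where
  "eta r a x = (\<lambda>b. if below a b then r a (Some b) x else undefined)"

definition separated :: "('l::complete_linorder option \<Rightarrow> 'x set) \<Rightarrow> ('l option \<Rightarrow> 'l option \<Rightarrow> 'x \<Rightarrow> 'x) \<Rightarrow> bool" where
  "separated F r \<longleftrightarrow> (\<forall>a. inj_on (eta r a) (F a))"

definition sup_plus :: "'l::complete_linorder option set \<Rightarrow> 'l option" where
  "sup_plus S = (if \<exists>b. Some b \<in> S then Some (Sup {b. Some b \<in> S}) else None)"

text \<open>Sheaf for the canonical topology: S \<subseteq> down(a) covers a iff its join is a.\<close>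
definition sheaf :: "('l::complete_linorder option \<Rightarrow> 'y set) \<Rightarrow> ('l option \<Rightarrow> 'l option \<Rightarrow> 'y \<Rightarrow> 'y) \<Rightarrow> bool" where
  "sheaf G g \<longleftrightarrow> presheaf G g \<and>
     (\<forall>a S. (\<forall>b\<in>S. le_plus b a) \<and> sup_plus S = a \<longrightarrow>
        (\<forall>x. (\<forall>b\<in>S. x b \<in> G b) \<and>
             (\<forall>b\<in>S. \<forall>b'\<in>S. \<forall>c. le_plus c b \<and> le_plus c b' \<longrightarrow> g b c (x b) = g b' c (x b'))
           \<longrightarrow> (\<exists>!y. y \<in> G a \<and> (\<forall>b\<in>S. g a b y = x b))))"

definition psh_morphism :: "('l::order option \<Rightarrow> 'x set) \<Rightarrow> ('l option \<Rightarrow> 'l option \<Rightarrow> 'x \<Rightarrow> 'x)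
    \<Rightarrow> ('l option \<Rightarrow> 'y set) \<Rightarrow> ('l option \<Rightarrow> 'l option \<Rightarrow> 'y \<Rightarrow> 'y) \<Rightarrow> ('l option \<Rightarrow> 'x \<Rightarrow> 'y) \<Rightarrow> bool" where
  "psh_morphism F r G g \<phi> \<longleftrightarrow> (\<forall>a. \<forall>x\<in>F a. \<phi> a x \<in> G a) \<and>
     (\<forall>a b. le_plus a b \<longrightarrow> (\<forall>x\<in>F b. \<phi> a (r b a x) = g b a (\<phi> b x)))"

end

theory Submission
  imports Defs
begin

text \<open>Every section of F over a is determined by its restriction to the bottom i, so \<eta> is
injective.  LF is a sheaf for any presheaf F: two members of a compatible family agree below
the meet of their indices, which in a chain is one of them.  A morphism \<phi> : F \<rightarrow> G into a
sheaf extends uniquely along \<eta>, because in a dense chain {b. b < a} covers a (and {i} covers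
i), so a section s of LF over a is a compatible family \<phi>(s b) in G which glues uniquely.\<close>

lemma le_plus_simps [simp]:
  "le_plus None y" "le_plus (Some a) None = False" "le_plus (Some a) (Some b) = (a \<le> b)"
  by (simp_all add: le_plus_def)

lemma below_imp_le: "below (Some a) c \<Longrightarrow> c \<le> (a::'l::complete_linorder)"
  by (auto simp: less_imp_le)

lemma below_imp_le_plus: "below a (c::'l::complete_linorder) \<Longrightarrow> le_plus (Some c) a"
  by (cases a) (simp_all add: below_imp_le)

lemma below_bot: "below (Some a) (bot::'l::complete_linorder)"
  by (cases "a = bot") (simp_all add: bot_less)

lemma below_mono:
  assumes "le_plus a b" and "below a (c::'l::complete_linorder)"
  shows "below b c"
  using assms by (cases a; cases b) (auto simp: bot_unique bot_less intro: less_le_trans)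

lemma below_downward_closed:
  assumes "below a (c::'l::complete_linorder)" and "e \<le> c"
  shows "below a e"
  using assms by (cases a) (auto simp: bot_unique intro: le_less_trans)

lemma below_min:
  assumes "below (Some b) d" and "below (Some b') (d::'l::complete_linorder)"
  shows "below (Some (min b b')) d"
  using assms by (auto simp: min_def bot_unique)

lemma Sup_lessThan_dense:
  fixes a :: "'l::complete_linorder"
  assumes dense: "\<forall>a b::'l::complete_linorder. a < b \<longrightarrow> (\<exists>s. a < s \<and> s < b)"
  shows "Sup {c. c < a} = a"
proof (rule antisym)
  show "Sup {c. c < a} \<le> a" by (rule Sup_least) simp
  show "a \<le> Sup {c. c < a}"
  proof (rule ccontr)
    assume "\<not> a \<le> Sup {c. c < a}"
    then obtain t where "Sup {c. c < a} < t" "t < a" using dense by force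
    then show False using Sup_upper[of t "{c. c < a}"] by simp
  qed
qed

lemma sup_plus_below:
  fixes a :: "'l::complete_linorder option"
  assumes dense: "\<forall>a b::'l::complete_linorder. a < b \<longrightarrow> (\<exists>s. a < s \<and> s < b)"
  shows "sup_plus (Some ` {c. below a c}) = a"
proof (cases a)
  case (Some a')
  have "Sup {c. below (Some a') c} = a'"
  proof (cases "a' = bot")
    case False
    then show ?thesis using Sup_lessThan_dense[OF dense] by simp
  qed simp
  moreover have "{b. Some b \<in> Some ` {c. below (Some a') c}} = {c. below (Some a') c}" by auto
  ultimately show ?thesis using Some below_bot[of a'] by (auto simp: sup_plus_def)
qed (simp add: sup_plus_def)

lemma sup_plus_cover:
  assumes "\<forall>b\<in>S. le_plus b a" and "sup_plus S = a" and "below a (c::'l::complete_linorder)"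
  shows "\<exists>b. Some b \<in> S \<and> below (Some b) c"
proof -
  obtain a' where a': "a = Some a'" using assms(3) by (cases a) auto
  have ne: "\<exists>b. Some b \<in> S" and sup: "Sup {b. Some b \<in> S} = a'"
    using assms(2) a' by (auto simp: sup_plus_def split: if_splits)
  show ?thesis
  proof (cases "c < a'")
    case True
    then show ?thesis using sup by (auto simp: less_Sup_iff)
  next
    case False
    then have "a' = bot" "c = bot" using assms(3) a' by auto
    then show ?thesis using ne sup by (auto simp: bot_unique)
  qed
qed

lemma presheaf_restrict_closed: "presheaf F r \<Longrightarrow> le_plus a b \<Longrightarrow> x \<in> F b \<Longrightarrow> r b a x \<in> F a"
  by (simp add: presheaf_def)

lemma presheaf_restrict_comp:
  "presheaf F r \<Longrightarrow> le_plus a b \<Longrightarrow> le_plus b c \<Longrightarrow> x \<in> F c \<Longrightarrow> r b a (r c b x) = r c a x"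
  unfolding presheaf_def by (elim conjE allE[of _ a] allE[of _ b] allE[of _ c]) blast

lemma sheaf_imp_presheaf: "sheaf G g \<Longrightarrow> presheaf G g"
  by (simp add: sheaf_def)

lemma sheaf_glue:
  assumes "sheaf G g" and "\<forall>b\<in>S. le_plus b a" and "sup_plus S = a" and "\<forall>b\<in>S. x b \<in> G b"
    and "\<forall>b\<in>S. \<forall>b'\<in>S. \<forall>c. le_plus c b \<and> le_plus c b' \<longrightarrow> g b c (x b) = g b' c (x b')"
  shows "\<exists>!y. y \<in> G a \<and> (\<forall>b\<in>S. g a b y = x b)"
  using conjunct2[OF assms(1)[unfolded sheaf_def], rule_format, OF conjI conjI, OF assms(2-5)] .

lemma psh_morphism_closed: "psh_morphism F r G g \<phi> \<Longrightarrow> x \<in> F a \<Longrightarrow> \<phi> a x \<in> G a"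
  by (simp add: psh_morphism_def)

lemma psh_morphism_natural:
  "psh_morphism F r G g \<phi> \<Longrightarrow> le_plus a b \<Longrightarrow> x \<in> F b \<Longrightarrow> \<phi> a (r b a x) = g b a (\<phi> b x)"
  by (simp add: psh_morphism_def)

lemma LF_value: "s \<in> LF F r a \<Longrightarrow> below a b \<Longrightarrow> s b \<in> F (Some b)"
  by (simp add: LF_def)

lemma LF_restrict_value: "s \<in> LF F r a \<Longrightarrow> below a b \<Longrightarrow> c \<le> b \<Longrightarrow> r (Some b) (Some c) (s b) = s c"
  by (simp add: LF_def)

lemma LF_undefined: "s \<in> LF F r a \<Longrightarrow> \<not> below a b \<Longrightarrow> s b = undefined"
  by (simp add: LF_def)

lemma presheaf_LF: "presheaf (LF F r) LFres"
  unfolding presheaf_def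
proof (intro conjI allI impI ballI)
  fix a b s assume ab: "le_plus a b" and s: "s \<in> LF F r b"
  show "LFres b a s \<in> LF F r a"
    using below_mono[OF ab] below_downward_closed LF_value[OF s] LF_restrict_value[OF s]
    by (auto simp: LF_def LFres_def)
next
  fix a s assume "s \<in> LF F r a"
  then show "LFres a a s = s" by (auto simp: LFres_def LF_undefined)
next
  fix a b c s assume "le_plus a b \<and> le_plus b c" "s \<in> LF F r c"
  then show "LFres b a (LFres c b s) = LFres c a s"
    using below_mono[of a b] by (auto simp: LFres_def)
qed

lemma LFres_in_LF: "le_plus a b \<Longrightarrow> s \<in> LF F r b \<Longrightarrow> LFres b a s \<in> LF F r a"
  using presheaf_restrict_closed[OF presheaf_LF] .

lemma LF_eqI_cover:
  assumes cover: "\<forall>b\<in>S. le_plus b a" "sup_plus S = a"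
    and y: "y \<in> LF F r a" and y': "y' \<in> LF F r a"
    and eq: "\<forall>b\<in>S. LFres a b y = LFres a b y'"
  shows "y = y'"
proof
  fix d show "y d = y' d"
  proof (cases "below a d")
    case True
    then obtain b where b: "Some b \<in> S" "below (Some b) d" using sup_plus_cover[OF cover] by blast
    have "LFres a (Some b) y d = LFres a (Some b) y' d" using eq b(1) by simp
    then show ?thesis using b(2) unfolding LFres_def by simp
  qed (simp add: LF_undefined[OF y] LF_undefined[OF y'])
qed

lemma compatible_family_agree:
  fixes b b' :: "'l::complete_linorder"
  assumes compat: "\<forall>b\<in>S. \<forall>b'\<in>S. \<forall>c. le_plus c b \<and> le_plus c b' \<longrightarrow> LFres b c (x b) = LFres b' c (x b')"
    and "Some b \<in> S" "Some b' \<in> S" "below (Some b) d" "below (Some b') d"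
  shows "x (Some b) d = x (Some b') d"
proof -
  have "LFres (Some b) (Some (min b b')) (x (Some b)) = LFres (Some b') (Some (min b b')) (x (Some b'))"
    using compat[rule_format, of "Some b" "Some b'" "Some (min b b')"] assms(2,3) by simp
  from fun_cong[OF this, of d] show ?thesis
    using below_min[OF assms(4,5)] unfolding LFres_def by simp
qed

lemma LF_glue_exists:
  assumes cover: "\<forall>b\<in>S. le_plus b a" "sup_plus S = a"
    and x: "\<forall>b\<in>S. x b \<in> LF F r b"
    and compat: "\<forall>b\<in>S. \<forall>b'\<in>S. \<forall>c. le_plus c b \<and> le_plus c b' \<longrightarrow> LFres b c (x b) = LFres b' c (x b')"
  shows "\<exists>y. y \<in> LF F r a \<and> (\<forall>b\<in>S. LFres a b y = x b)"
proof -
  define pick where "pick c = (SOME b. Some b \<in> S \<and> below (Some b) c)" for c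
  have pick: "Some (pick c) \<in> S \<and> below (Some (pick c)) c" if "below a c" for c
    unfolding pick_def by (rule someI_ex) (rule sup_plus_cover[OF cover that])
  define y where "y c = (if below a c then x (Some (pick c)) c else undefined)" for c
  have y_eq: "y d = x (Some b) d" if b: "Some b \<in> S" "below (Some b) d" for b d
  proof -
    have "below a d" using below_mono b cover(1) by blast
    then show ?thesis
      using compatible_family_agree[OF compat _ b(1) _ b(2)] pick by (simp add: y_def)
  qed
  have "y \<in> LF F r a"
    unfolding LF_def
  proof (intro CollectI conjI allI impI)
    fix c assume c: "below a c"
    then have p: "Some (pick c) \<in> S" "below (Some (pick c)) c" using pick by auto
    show "y c \<in> F (Some c)" using LF_value[OF bspec[OF x p(1)] p(2)] c by (simp add: y_def)
  next
    fix c e assume ce: "below a c \<and> e \<le> c"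
    then have p: "Some (pick c) \<in> S" "below (Some (pick c)) c" using pick by auto
    then have "below (Some (pick c)) e" using below_downward_closed ce by blast
    then show "r (Some c) (Some e) (y c) = y e"
      using y_eq[OF p] y_eq[OF p(1)] LF_restrict_value[OF bspec[OF x p(1)] p(2)] ce by simp
  qed (simp add: y_def)
  moreover have "LFres a b y = x b" if b: "b \<in> S" for b
  proof
    fix d show "LFres a b y d = x b d"
      using b y_eq[of _ d] LF_undefined[of "x b"] x by (cases b) (auto simp: LFres_def)
  qed
  ultimately show ?thesis by blast
qed

lemma sheaf_LF: "sheaf (LF F r) LFres"
  unfolding sheaf_def
proof (intro conjI allI impI presheaf_LF)
  fix a S x
  assume cover: "(\<forall>b\<in>S. le_plus b a) \<and> sup_plus S = a"
    and fam: "(\<forall>b\<in>S. x b \<in> LF F r b) \<and>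
      (\<forall>b\<in>S. \<forall>b'\<in>S. \<forall>c. le_plus c b \<and> le_plus c b' \<longrightarrow> LFres b c (x b) = LFres b' c (x b'))"
  obtain y where y: "y \<in> LF F r a" "\<forall>b\<in>S. LFres a b y = x b"
    using LF_glue_exists[OF conjunct1[OF cover] conjunct2[OF cover] conjunct1[OF fam] conjunct2[OF fam]]
    by blast
  show "\<exists>!y. y \<in> LF F r a \<and> (\<forall>b\<in>S. LFres a b y = x b)"
  proof (rule ex1I)
    show "y \<in> LF F r a \<and> (\<forall>b\<in>S. LFres a b y = x b)" using y by blast
    fix y' assume "y' \<in> LF F r a \<and> (\<forall>b\<in>S. LFres a b y' = x b)"
    then show "y' = y"
      by (intro LF_eqI_cover[OF conjunct1[OF cover] conjunct2[OF cover]]) (use y in auto)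
  qed
qed

lemma eta_in_LF:
  assumes F: "presheaf F r" and x: "x \<in> F a"
  shows "eta r a x \<in> LF F r a"
  unfolding LF_def
proof (intro CollectI conjI allI impI)
  fix b assume "below a b"
  then show "eta r a x b \<in> F (Some b)"
    using presheaf_restrict_closed[OF F below_imp_le_plus x] by (simp add: eta_def)
next
  fix b c assume bc: "below a b \<and> c \<le> b"
  then show "r (Some b) (Some c) (eta r a x b) = eta r a x c"
    using presheaf_restrict_comp[OF F _ below_imp_le_plus x, of "Some c" b]
      below_downward_closed[of a b c] by (simp add: eta_def)
qed (simp add: eta_def)

lemma psh_morphism_eta:
  assumes F: "presheaf F r"
  shows "psh_morphism F r (LF F r) LFres (eta r)"
  unfolding psh_morphism_def
proof (intro conjI allI impI ballI eta_in_LF[OF F])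
  fix a b x assume ab: "le_plus a b" and x: "x \<in> F b"
  show "eta r a (r b a x) = LFres b a (eta r b x)"
    using presheaf_restrict_comp[OF F below_imp_le_plus ab x] below_mono[OF ab]
    by (auto simp: eta_def LFres_def)
qed

lemma LFres_eq_eta:
  assumes s: "s \<in> LF F r a" and c: "below a c"
  shows "LFres a (Some c) s = eta r (Some c) (s c)"
proof
  fix d show "LFres a (Some c) s d = eta r (Some c) (s c) d"
    using LF_restrict_value[OF s c] below_downward_closed[OF c] below_imp_le[of c d]
    by (auto simp: LFres_def eta_def simp del: below.simps)
qed

lemma inj_on_eta:
  assumes "presheaf_of_monos F r"
  shows "inj_on (eta r a) (F a)"
proof (rule inj_onI)
  fix x y assume x: "x \<in> F a" and y: "y \<in> F a" and e: "eta r a x = eta r a y"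
  show "x = y"
  proof (cases a)
    case None
    then show ?thesis using assms x y by (force simp: presheaf_of_monos_def)
  next
    case (Some a')
    have "r (Some a') (Some bot) x = r (Some a') (Some bot) y"
      using fun_cong[OF e, of bot] Some by (simp add: eta_def below_bot del: below.simps)
    moreover have "inj_on (r (Some a') (Some bot)) (F (Some a'))"
      using assms by (simp add: presheaf_of_monos_def)
    ultimately show ?thesis using x y Some by (simp add: inj_on_def)
  qed
qed

definition LF_extension ::
    "('l::complete_linorder option \<Rightarrow> 'y set) \<Rightarrow> ('l option \<Rightarrow> 'l option \<Rightarrow> 'y \<Rightarrow> 'y)
      \<Rightarrow> ('l option \<Rightarrow> 'x \<Rightarrow> 'y) \<Rightarrow> 'l option \<Rightarrow> ('l \<Rightarrow> 'x) \<Rightarrow> 'y" where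
  "LF_extension G g \<phi> a s = (THE y. y \<in> G a \<and> (\<forall>c. below a c \<longrightarrow> g a (Some c) y = \<phi> (Some c) (s c)))"

context
  fixes F :: "'l::complete_linorder option \<Rightarrow> 'x set" and r u
    and G :: "'l option \<Rightarrow> 'y set" and g \<phi>
  assumes F: "presheaf F r" and F_None: "F None = {u}"
    and dense: "\<forall>a b::'l. a < b \<longrightarrow> (\<exists>s. a < s \<and> s < b)"
    and G: "sheaf G g" and \<phi>: "psh_morphism F r G g \<phi>"
begin

lemma LF_restrict_below:
  assumes s: "s \<in> LF F r a" and c: "below a c" and e: "le_plus e (Some c)"
  shows "r (Some c) e (s c) = (case e of None \<Rightarrow> u | Some e' \<Rightarrow> s e')"
proof (cases e)
  case None
  then show ?thesis using presheaf_restrict_closed[OF F e LF_value[OF s c]] F_None by simp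
qed (use LF_restrict_value[OF s c] e in simp)

lemma ex1_LF_extension:
  assumes s: "s \<in> LF F r a"
  shows "\<exists>!y. y \<in> G a \<and> (\<forall>c. below a c \<longrightarrow> g a (Some c) y = \<phi> (Some c) (s c))"
proof -
  let ?S = "Some ` {c. below a c}"
  have "\<exists>!y. y \<in> G a \<and> (\<forall>b\<in>?S. g a b y = \<phi> b (s (the b)))"
  proof (rule sheaf_glue[OF G])
    show "\<forall>b\<in>?S. le_plus b a" by (auto intro: below_imp_le_plus)
    show "sup_plus ?S = a" by (rule sup_plus_below[OF dense])
    show "\<forall>b\<in>?S. \<phi> b (s (the b)) \<in> G b" using psh_morphism_closed[OF \<phi>] LF_value[OF s] by auto
    have "g (Some c) e (\<phi> (Some c) (s c)) = \<phi> e (case e of None \<Rightarrow> u | Some e' \<Rightarrow> s e')"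
      if "below a c" "le_plus e (Some c)" for c e
      using psh_morphism_natural[OF \<phi> that(2) LF_value[OF s that(1)]] LF_restrict_below[OF s that]
      by simp
    then show "\<forall>b\<in>?S. \<forall>b'\<in>?S. \<forall>e. le_plus e b \<and> le_plus e b' \<longrightarrow>
        g b e (\<phi> b (s (the b))) = g b' e (\<phi> b' (s (the b')))"
      by auto
  qed
  then show ?thesis by simp
qed

lemma LF_extension_char:
  assumes "s \<in> LF F r a"
  shows "LF_extension G g \<phi> a s \<in> G a"
    and "below a c \<Longrightarrow> g a (Some c) (LF_extension G g \<phi> a s) = \<phi> (Some c) (s c)"
  using theI'[OF ex1_LF_extension[OF assms]] unfolding LF_extension_def by auto

lemma LF_extension_unique:
  assumes "s \<in> LF F r a" and "y \<in> G a" and "\<And>c. below a c \<Longrightarrow> g a (Some c) y = \<phi> (Some c) (s c)"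
  shows "y = LF_extension G g \<phi> a s"
  using ex1_LF_extension[OF assms(1)] LF_extension_char[OF assms(1)] assms(2,3) by blast

lemma psh_morphism_LF_extension: "psh_morphism (LF F r) LFres G g (LF_extension G g \<phi>)"
  unfolding psh_morphism_def
proof (intro conjI allI impI ballI LF_extension_char(1))
  fix a b s assume ab: "le_plus a b" and s: "s \<in> LF F r b"
  show "LF_extension G g \<phi> a (LFres b a s) = g b a (LF_extension G g \<phi> b s)"
  proof (rule LF_extension_unique[symmetric, OF LFres_in_LF[OF ab s]])
    show "g b a (LF_extension G g \<phi> b s) \<in> G a"
      using presheaf_restrict_closed[OF sheaf_imp_presheaf[OF G] ab LF_extension_char(1)[OF s]] .
    fix c assume c: "below a c"
    have "g a (Some c) (g b a (LF_extension G g \<phi> b s)) = g b (Some c) (LF_extension G g \<phi> b s)"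
      using presheaf_restrict_comp[OF sheaf_imp_presheaf[OF G] below_imp_le_plus[OF c] ab
          LF_extension_char(1)[OF s]] .
    also have "\<dots> = \<phi> (Some c) (s c)" using LF_extension_char(2)[OF s below_mono[OF ab c]] .
    finally show "g a (Some c) (g b a (LF_extension G g \<phi> b s)) = \<phi> (Some c) (LFres b a s c)"
      using c by (simp add: LFres_def)
  qed
qed

lemma LF_extension_eta: "x \<in> F a \<Longrightarrow> LF_extension G g \<phi> a (eta r a x) = \<phi> a x"
  by (rule LF_extension_unique[symmetric, OF eta_in_LF[OF F] psh_morphism_closed[OF \<phi>]])
     (simp_all add: eta_def psh_morphism_natural[OF \<phi> below_imp_le_plus])

lemma LF_extension_unique_morphism:
  assumes \<psi>: "psh_morphism (LF F r) LFres G g \<psi>" and \<psi>_eta: "\<forall>a. \<forall>x\<in>F a. \<psi> a (eta r a x) = \<phi> a x"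
    and s: "s \<in> LF F r a"
  shows "\<psi> a s = LF_extension G g \<phi> a s"
proof (rule LF_extension_unique[OF s psh_morphism_closed[OF \<psi> s]])
  fix c assume c: "below a c"
  have "g a (Some c) (\<psi> a s) = \<psi> (Some c) (LFres a (Some c) s)"
    using psh_morphism_natural[OF \<psi> below_imp_le_plus[OF c] s] by simp
  also have "\<dots> = \<psi> (Some c) (eta r (Some c) (s c))" using LFres_eq_eta[OF s c] by simp
  also have "\<dots> = \<phi> (Some c) (s c)" using \<psi>_eta LF_value[OF s c] by blast
  finally show "g a (Some c) (\<psi> a s) = \<phi> (Some c) (s c)" .
qed

end

theorem corollary21:
  fixes F :: "'l::complete_linorder option \<Rightarrow> 'x set"
    and r :: "'l option \<Rightarrow> 'l option \<Rightarrow> 'x \<Rightarrow> 'x"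
  assumes dense: "\<forall>a b::'l. a < b \<longrightarrow> (\<exists>s. a < s \<and> s < b)"
    and mono: "presheaf_of_monos F r"
  shows "(\<forall>a. inj_on (eta r a) (F a))
       \<and> separated F r
       \<and> psh_morphism F r (LF F r) LFres (eta r)
       \<and> sheaf (LF F r) LFres
       \<and> (\<forall>(G :: 'l option \<Rightarrow> 'y set) g \<phi>. sheaf G g \<and> psh_morphism F r G g \<phi> \<longrightarrow>
            (\<exists>\<psi>. psh_morphism (LF F r) LFres G g \<psi>
                 \<and> (\<forall>a. \<forall>x\<in>F a. \<psi> a (eta r a x) = \<phi> a x)
                 \<and> (\<forall>\<psi>'. psh_morphism (LF F r) LFres G g \<psi>'
                         \<and> (\<forall>a. \<forall>x\<in>F a. \<psi>' a (eta r a x) = \<phi> a x)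
                       \<longrightarrow> (\<forall>a. \<forall>s\<in>LF F r a. \<psi>' a s = \<psi> a s))))"
proof -
  have F: "presheaf F r" using mono by (simp add: presheaf_of_monos_def)
  obtain u where F_None: "F None = {u}" using mono by (auto simp: presheaf_of_monos_def)
  have inj: "\<forall>a. inj_on (eta r a) (F a)" using inj_on_eta[OF mono] by blast
  have "\<exists>\<psi>. psh_morphism (LF F r) LFres G g \<psi>
                 \<and> (\<forall>a. \<forall>x\<in>F a. \<psi> a (eta r a x) = \<phi> a x)
                 \<and> (\<forall>\<psi>'. psh_morphism (LF F r) LFres G g \<psi>'
                         \<and> (\<forall>a. \<forall>x\<in>F a. \<psi>' a (eta r a x) = \<phi> a x)
                       \<longrightarrow> (\<forall>a. \<forall>s\<in>LF F r a. \<psi>' a s = \<psi> a s))"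
    if "sheaf G g" "psh_morphism F r G g \<phi>" for G :: "'l option \<Rightarrow> 'y set" and g \<phi>
    using psh_morphism_LF_extension[OF F F_None dense that]
      LF_extension_eta[OF F F_None dense that]
      LF_extension_unique_morphism[OF F F_None dense that] by blast
  then show ?thesis
    using inj psh_morphism_eta[OF F] sheaf_LF by (simp add: separated_def)
qed

end
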